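(* Let $m,n$ be nonnegative integers with $0\leqslant m\leqslant n$, let $\varepsilon\in\{+1,-1\}$, and let $z\in\mathbb{C}\setminus(-\infty,1]$. Then \begin{align*} \frac{\mathrm{d}^{m}}{\mathrm{d}z^{m}}\bigl[P_{n}(z)\ln(z+\varepsilon)\bigr] &= \frac{(2m)!}{2^{m}m!}C_{n-m}^{(m+1/2)}(z)\ln(z+\varepsilon) +\frac{(2m)!}{2^{m}m!}[\psi(n+1)-\psi(n-m+1)]C_{n-m}^{(m+1/2)}(z)\\ &\quad +(-\varepsilon)^{n}\frac{(n+m)!}{(n-m)!}(z^{2}-1)^{-m/2}\sum_{k=0}^{m-1}(-1)^{k}\frac{2k+1}{(n-k)(k+n+1)}P_{k}^{-m}(\varepsilon z)\\ &\quad -(-\varepsilon)^{n+m}\frac{(2m)!}{2^{m}m!}\sum_{k=0}^{n-m-1}(-\varepsilon)^{k}\frac{2k+2m+1}{(n-m-k)(k+n+m+1)}\left[1-\frac{k!\,(n+m)!}{(k+2m)!\,(n-m)!}\right]C_{k}^{(m+1/2)}(z). \end{align*}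
   Context: $P_n(z)$ denotes the Legendre polynomial of degree $n$. $C_{j}^{(\alpha)}(z)$ denotes the Gegenbauer (ultraspherical) polynomial of degree $j$ and parameter $\alpha$. $\psi(\zeta)=\Gamma'(\zeta)/\Gamma(\zeta)$ is the digamma function. The complex plane is cut along the real axis from $-\infty$ to $+1$; for $z\in\mathbb{C}\setminus(-\infty,1]$, $\ln(z\pm1)$ and all fractional powers $(z\pm1)^{s}$ denote principal branches, and $(z^{2}-1)^{-m/2}:=(z-1)^{-m/2}(z+1)^{-m/2}$. The associated Legendre function of the first kind of negative integer order is $P_{k}^{-m}(\zeta)=\frac{1}{m!}\left(\frac{\zeta-1}{\zeta+1}\right)^{m/2}{}_{2}F_{1}\!\left(-k,k+1;1+m;\frac{1-\zeta}{2}\right)$, where for $\zeta=z$ one takes $\left(\frac{z-1}{z+1}\right)^{m/2}:=(z-1)^{m/2}(z+1)^{-m/2}$, and for $\zeta=-z$ one takes $\left(\frac{-z-1}{-z+1}\right)^{m/2}:=(z+1)^{m/2}(z-1)^{-m/2}$ (consistent with $-z\mp1=\mathrm{e}^{\mp\mathrm{i}\pi}(z\pm1)$ on the cut plane). The case $\varepsilon=+1$ concerns $\ln(z+1)$ and the case $\varepsilon=-1$ concerns $\ln(z-1)$. Empty sums are zero. *)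

theory Defs
  imports "HOL-Analysis.Analysis"
begin

definition legendreP :: "nat \<Rightarrow> complex \<Rightarrow> complex" where
  "legendreP n z = (\<Sum>k\<le>n div 2. (-1)^k * of_nat (fact (2*n - 2*k))
      / (2^n * of_nat (fact k) * of_nat (fact (n - k)) * of_nat (fact (n - 2*k))) * z^(n - 2*k))"

definition gegenbauerC :: "nat \<Rightarrow> complex \<Rightarrow> complex \<Rightarrow> complex" where
  "gegenbauerC j a z = (\<Sum>k\<le>j div 2. (-1)^k * pochhammer a (j - k)
      / (of_nat (fact k) * of_nat (fact (j - 2*k))) * (2*z)^(j - 2*k))"

definition hyp2F1_leg :: "nat \<Rightarrow> nat \<Rightarrow> complex \<Rightarrow> complex" where
  "hyp2F1_leg k m x = (\<Sum>j\<le>k. pochhammer (- of_nat k) j * pochhammer (of_nat k + 1) j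
      / (pochhammer (1 + of_nat m) j * of_nat (fact j)) * x^j)"

(* P_k^{-m}(eps * z) for eps in {1,-1}, with the branch conventions of the paper:
   eps = 1:  ((z-1)/(z+1))^{m/2} := (z-1)^{m/2} (z+1)^{-m/2}
   eps = -1: ((-z-1)/(-z+1))^{m/2} := (z+1)^{m/2} (z-1)^{-m/2}  *)
definition legendreP_neg_signed :: "nat \<Rightarrow> nat \<Rightarrow> int \<Rightarrow> complex \<Rightarrow> complex" where
  "legendreP_neg_signed k m eps z =
     (if eps = 1 then (z - 1) powr (of_nat m / 2) * (z + 1) powr (- (of_nat m / 2))
      else (z + 1) powr (of_nat m / 2) * (z - 1) powr (- (of_nat m / 2)))
     / of_nat (fact m) * hyp2F1_leg k m ((1 - of_int eps * z) / 2)"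

end

theory Submission
  imports Defs "HOL-Complex_Analysis.Cauchy_Integral_Formula"
begin

(* The m-th derivative of P_n is (2m-1)!! C_{n-m}^{(m+1/2)}. For e = +-1 the functions
   Q_{l,m}(z) = 2F1(-l, l+1; 1+m; (1-ez)/2) / (m! (z+e)^m), which are (z^2-1)^{-m/2} P_l^{-m}(ez),
   satisfy Q_{l,0} = e^l P_l and Q_{l,m}' = (l-m)(l+m+1) Q_{l,m+1}; hence
   P_l^{(m)} = e^l (l+m)!/(l-m)! Q_{l,m} for m <= l.
   Write R_m for the right-hand side of the theorem expressed through P_l^{(m)}, Q_{l,m} and
   harmonic numbers (psi(n+1) - psi(n-m+1) = H_n - H_{n-m}). For m = 0 its two finite sums cancel,
   so R_0 = P_n ln(z+e). Differentiating R_m gives R_{m+1}: the only new term, P_n^{(m)}/(z+e),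
   is re-expanded in the Q_{l,m+1} by the contiguous relation
   (m+1) F(n,m) - (n+m+1) F(n,m+1) = (-1)^n sum_{l<n} (-1)^l (2l+1) F(l,m+1)
   for F(l,m) = 2F1(-l, l+1; 1+m; x). *)

section \<open>Derivatives of Legendre polynomials\<close>

definition odd_double_fact :: "nat \<Rightarrow> complex" where
  "odd_double_fact m = of_nat (fact (2*m)) / (2^m * of_nat (fact m))"

lemma odd_double_fact_Suc: "odd_double_fact (Suc m) = odd_double_fact m * (2 * of_nat m + 1)"
proof -
  have "of_nat (fact (2 * Suc m)) = (2 * of_nat m + 1) * (2 * (of_nat m + 1)) * (of_nat (fact (2*m)) :: complex)"
    and "of_nat (fact (Suc m)) = (of_nat m + 1) * (of_nat (fact m) :: complex)"
    by (simp_all add: algebra_simps)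
  moreover have "(of_nat m + 1 :: complex) \<noteq> 0" "(2 * of_nat m + 2 :: complex) \<noteq> 0"
    by (simp_all add: complex_eq_iff)
  ultimately show ?thesis
    unfolding odd_double_fact_def power_Suc by (simp only:) (simp add: divide_simps)
qed

lemma legendreP_eq_gegenbauerC: "legendreP n z = gegenbauerC n (1/2) z"
  unfolding legendreP_def gegenbauerC_def
proof (rule sum.cong[OF refl])
  fix k assume "k \<in> {..n div 2}"
  then have k: "2*k \<le> n" by auto
  have "pochhammer (1/2) (n-k) = (of_nat (fact (2*(n-k))) / (2^(2*(n-k)) * of_nat (fact (n-k))) :: complex)"
    using fact_double[of "n-k", where 'a=complex] by (simp add: field_simps)
  moreover have "2*(n-k) = n + (n-2*k)" "2*n - 2*k = 2*(n-k)"
    using k by simp_all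
  ultimately show "(-1)^k * of_nat (fact (2*n - 2*k)) / (2^n * of_nat (fact k) * of_nat (fact (n - k)) * of_nat (fact (n - 2*k))) * z^(n - 2*k)
     = (-1)^k * pochhammer (1/2) (n - k) / (of_nat (fact k) * of_nat (fact (n - 2*k))) * (2*z)^(n - 2*k)"
    by (simp add: power_add power_mult_distrib field_simps)
qed

lemma has_field_derivative_gegenbauerC:
  "(gegenbauerC (Suc j) a has_field_derivative 2 * a * gegenbauerC j (a + 1) z) (at z)"
proof -
  define t where "t k = (-1)^k * pochhammer a (Suc j - k) / (of_nat (fact k) * of_nat (fact (Suc j - 2*k)))" for k
  define d where "d k = t k * (of_nat (Suc j - 2*k) * (2*z)^(Suc j - 2*k - 1) * 2)" for k
  have "((\<lambda>z. (2*z)^p) has_field_derivative of_nat p * (2*z)^(p-1) * 2) (at z)" for p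
    by (rule derivative_eq_intros refl | simp)+
  then have "(gegenbauerC (Suc j) a has_field_derivative (\<Sum>k\<le>Suc j div 2. d k)) (at z)"
    unfolding gegenbauerC_def t_def[symmetric] d_def by (intro DERIV_sum DERIV_cmult)
  moreover have "(\<Sum>k\<le>Suc j div 2. d k) = (\<Sum>k\<le>j div 2. d k)"
  proof (cases "Suc j div 2 = j div 2")
    case False
    then have "odd j" by presburger
    then obtain q where "j = 2*q + 1" by (rule oddE)
    then show ?thesis by (simp add: d_def)
  qed simp
  moreover have "d k = 2 * a * ((-1)^k * pochhammer (a+1) (j - k) / (of_nat (fact k) * of_nat (fact (j - 2*k))) * (2*z)^(j - 2*k))"
    if "k \<le> j div 2" for k
  proof -
    define N where "N = (of_nat (Suc (j - 2*k)) :: complex)"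
    from that have jk: "Suc j - k = Suc (j - k)" "Suc j - 2*k = Suc (j - 2*k)" by auto
    then have "pochhammer a (Suc j - k) = a * pochhammer (a+1) (j-k)"
      and "of_nat (Suc j - 2*k) = N" "Suc j - 2*k - 1 = j - 2*k"
      by (simp_all add: N_def pochhammer_rec del: of_nat_Suc)
    moreover have "of_nat (fact (Suc j - 2*k)) = N * of_nat (fact (j - 2*k))"
      by (simp only: jk fact_Suc of_nat_id of_nat_mult N_def)
    moreover have "N \<noteq> 0" by (simp add: N_def del: of_nat_Suc)
    ultimately show ?thesis
      unfolding d_def t_def by (simp add: field_simps)
  qed
  ultimately show ?thesis
    by (simp add: gegenbauerC_def sum_distrib_left)
qed

lemma legendreP_holomorphic: "legendreP n holomorphic_on A"
  unfolding legendreP_def by (intro holomorphic_intros)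

lemma has_field_derivative_higher_deriv_legendreP:
  "((deriv ^^ m) (legendreP l) has_field_derivative (deriv ^^ Suc m) (legendreP l) z) (at z)"
  using holomorphic_derivI[OF holomorphic_higher_deriv[OF legendreP_holomorphic] open_UNIV UNIV_I]
  by simp

lemma higher_deriv_legendreP:
  "m \<le> l \<Longrightarrow> (deriv ^^ m) (legendreP l) z = odd_double_fact m * gegenbauerC (l - m) (of_nat m + 1/2) z"
proof (induction m arbitrary: z)
  case 0
  then show ?case by (simp add: odd_double_fact_def legendreP_eq_gegenbauerC)
next
  case (Suc m)
  then have "l - m = Suc (l - Suc m)" by simp
  with Suc have "(deriv ^^ m) (legendreP l) = (\<lambda>z. odd_double_fact m * gegenbauerC (Suc (l - Suc m)) (of_nat m + 1/2) z)"
    by auto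
  moreover have "((\<lambda>z. odd_double_fact m * gegenbauerC (Suc (l - Suc m)) (of_nat m + 1/2) z) has_field_derivative
      odd_double_fact m * (2 * (of_nat m + 1/2) * gegenbauerC (l - Suc m) (of_nat m + 1/2 + 1) z)) (at z)"
    by (intro DERIV_cmult has_field_derivative_gegenbauerC)
  moreover have "odd_double_fact m * (2 * (of_nat m + 1/2) * gegenbauerC (l - Suc m) (of_nat m + 1/2 + 1) z)
      = odd_double_fact (Suc m) * gegenbauerC (l - Suc m) (of_nat (Suc m) + 1/2) z"
    by (simp add: odd_double_fact_Suc algebra_simps)
  ultimately show ?case
    by (simp add: DERIV_imp_deriv)
qed

lemma higher_deriv_legendreP_eq_0: "l < m \<Longrightarrow> (deriv ^^ m) (legendreP l) z = 0"
proof (induction m arbitrary: z)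
  case (Suc m)
  have "(deriv ^^ m) (legendreP l) = (\<lambda>_. if l = m then odd_double_fact m else 0)"
    using Suc by (auto simp: higher_deriv_legendreP gegenbauerC_def)
  then show ?case by simp
qed simp

section \<open>The terminating hypergeometric series\<close>

definition hyp2F1_leg_coeff :: "nat \<Rightarrow> nat \<Rightarrow> nat \<Rightarrow> complex" where
  "hyp2F1_leg_coeff k m j = pochhammer (- of_nat k) j * pochhammer (of_nat k + 1) j
      / (pochhammer (1 + of_nat m) j * of_nat (fact j))"

lemma hyp2F1_leg_coeff_eq_0: "k < j \<Longrightarrow> hyp2F1_leg_coeff k m j = 0"
  unfolding hyp2F1_leg_coeff_def by (subst pochhammer_eq_0_iff[THEN iffD2]) auto

lemma hyp2F1_leg_eq_sum: "k \<le> N \<Longrightarrow> hyp2F1_leg k m x = (\<Sum>j\<le>N. hyp2F1_leg_coeff k m j * x^j)"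
proof -
  assume "k \<le> N"
  then have "(\<Sum>j\<le>N. hyp2F1_leg_coeff k m j * x^j) = (\<Sum>j\<le>k. hyp2F1_leg_coeff k m j * x^j)"
    by (intro sum.mono_neutral_right) (auto simp: hyp2F1_leg_coeff_eq_0)
  then show ?thesis by (simp add: hyp2F1_leg_def hyp2F1_leg_coeff_def)
qed

lemma pochhammer_of_nat_Suc_neq_0: "pochhammer (of_nat n + 1 :: complex) j \<noteq> 0"
  unfolding pochhammer_eq_0_iff by (auto simp: complex_eq_iff)

lemma hyp2F1_leg_coeff_contiguous:
  "(of_nat m + 1) * (hyp2F1_leg_coeff (Suc n) m j + hyp2F1_leg_coeff n m j) =
   (of_nat n + of_nat m + 2) * hyp2F1_leg_coeff (Suc n) (Suc m) j + (of_nat m - of_nat n) * hyp2F1_leg_coeff n (Suc m) j"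
proof (cases j)
  case 0
  then show ?thesis by (simp add: hyp2F1_leg_coeff_def algebra_simps)
next
  case (Suc i)
  define P1 where "P1 = pochhammer (- of_nat n :: complex) i"
  define P2 where "P2 = pochhammer (of_nat n + 2 :: complex) i"
  define Q where "Q = pochhammer (of_nat m + 2 :: complex) i"
  define F where "F = (of_nat (fact (Suc i)) :: complex)"
  have poch: "pochhammer (- of_nat (Suc n)) (Suc i) = - (of_nat n + 1) * P1"
    "pochhammer (of_nat n + 1) (Suc i) = (of_nat n + 1) * P2"
    "pochhammer (1 + of_nat m) (Suc i) = (of_nat m + 1) * Q"
    by (simp_all add: P1_def P2_def Q_def pochhammer_rec algebra_simps)
  have poch': "pochhammer (- of_nat n) (Suc i) = (of_nat i - of_nat n) * P1"
    "pochhammer (of_nat (Suc n) + 1) (Suc i) = (of_nat n + 2 + of_nat i) * P2"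
    "pochhammer (1 + of_nat (Suc m)) (Suc i) = (of_nat m + 2 + of_nat i) * Q"
    by (simp_all add: P1_def P2_def Q_def pochhammer_rec' algebra_simps)
  have "Q \<noteq> 0"
    using pochhammer_of_nat_Suc_neq_0[of "Suc m" i] by (simp add: Q_def add.commute)
  moreover have "F \<noteq> 0"
    by (simp add: F_def del: fact_Suc)
  moreover have "(of_nat m + 1 :: complex) \<noteq> 0" "(of_nat m + 2 + of_nat i :: complex) \<noteq> 0"
    by (simp_all add: complex_eq_iff)
  ultimately show ?thesis
    unfolding Suc hyp2F1_leg_coeff_def poch poch' F_def[symmetric]
    by (simp add: divide_simps) algebra
qed

lemma hyp2F1_leg_contiguous:
  "(of_nat m + 1) * (hyp2F1_leg (Suc n) m x + hyp2F1_leg n m x) =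
   (of_nat n + of_nat m + 2) * hyp2F1_leg (Suc n) (Suc m) x + (of_nat m - of_nat n) * hyp2F1_leg n (Suc m) x"
proof -
  have F: "hyp2F1_leg (Suc n) m' x = (\<Sum>j\<le>Suc n. hyp2F1_leg_coeff (Suc n) m' j * x^j)"
    "hyp2F1_leg n m' x = (\<Sum>j\<le>Suc n. hyp2F1_leg_coeff n m' j * x^j)" for m'
    by (intro hyp2F1_leg_eq_sum le_refl le_SucI)+
  have "(of_nat m + 1) * (hyp2F1_leg (Suc n) m x + hyp2F1_leg n m x)
      = (\<Sum>j\<le>Suc n. (of_nat m + 1) * (hyp2F1_leg_coeff (Suc n) m j + hyp2F1_leg_coeff n m j) * x^j)"
    unfolding F sum.distrib[symmetric] sum_distrib_left by (simp only: distrib_left distrib_right mult.assoc)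
  also have "\<dots> = (\<Sum>j\<le>Suc n. ((of_nat n + of_nat m + 2) * hyp2F1_leg_coeff (Suc n) (Suc m) j
      + (of_nat m - of_nat n) * hyp2F1_leg_coeff n (Suc m) j) * x^j)"
    by (simp only: hyp2F1_leg_coeff_contiguous)
  also have "\<dots> = (of_nat n + of_nat m + 2) * hyp2F1_leg (Suc n) (Suc m) x + (of_nat m - of_nat n) * hyp2F1_leg n (Suc m) x"
    unfolding F sum.distrib[symmetric] sum_distrib_left by (simp only: distrib_left distrib_right mult.assoc)
  finally show ?thesis .
qed

lemma hyp2F1_leg_contiguous_sum:
  "(of_nat m + 1) * hyp2F1_leg n m x - (of_nat n + of_nat m + 1) * hyp2F1_leg n (Suc m) x
   = (-1)^n * (\<Sum>l<n. (-1)^l * (2 * of_nat l + 1) * hyp2F1_leg l (Suc m) x)"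
proof (induction n)
  case 0
  then show ?case by (simp add: hyp2F1_leg_def)
next
  case (Suc n)
  have "(-1::complex)^n * (-1)^n = 1"
    by (simp add: power_mult_distrib[symmetric])
  then show ?case
    using Suc.IH hyp2F1_leg_contiguous[of m n x] by (simp add: algebra_simps)
qed

lemma hyp2F1_leg_coeff_deriv:
  "of_nat j * hyp2F1_leg_coeff l m j - (of_nat j + 1) * hyp2F1_leg_coeff l m (Suc j) - of_nat m * hyp2F1_leg_coeff l m j
   = (of_nat l - of_nat m) * (of_nat l + of_nat m + 1) / (of_nat m + 1) * hyp2F1_leg_coeff l (Suc m) j"
proof -
  define A where "A = pochhammer (- of_nat l :: complex) j"
  define B where "B = pochhammer (of_nat l + 1 :: complex) j"
  define C where "C = pochhammer (1 + of_nat m :: complex) j"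
  define F where "F = (of_nat (fact j) :: complex)"
  have nz: "C \<noteq> 0" "F \<noteq> 0" "(1 + of_nat m :: complex) \<noteq> 0" "(1 + of_nat m + of_nat j :: complex) \<noteq> 0"
    "(of_nat j + 1 :: complex) \<noteq> 0"
    using pochhammer_of_nat_Suc_neq_0[of m j]
    by (simp_all add: C_def F_def add.commute complex_eq_iff)
  have "(1 + of_nat m) * pochhammer (2 + of_nat m) j = pochhammer (1 + of_nat m :: complex) (Suc j)"
    by (simp add: pochhammer_rec algebra_simps)
  also have "\<dots> = C * (1 + of_nat m + of_nat j)"
    by (simp add: C_def pochhammer_rec')
  finally have "pochhammer (1 + of_nat (Suc m) :: complex) j = C * (1 + of_nat m + of_nat j) / (1 + of_nat m)"
    using nz by (simp add: field_simps)
  moreover have "pochhammer (- of_nat l :: complex) (Suc j) = (of_nat j - of_nat l) * A"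
    "pochhammer (of_nat l + 1 :: complex) (Suc j) = (of_nat l + 1 + of_nat j) * B"
    "pochhammer (1 + of_nat m :: complex) (Suc j) = (1 + of_nat m + of_nat j) * C"
    "(of_nat (fact (Suc j)) :: complex) = (of_nat j + 1) * F"
    by (simp_all add: A_def B_def C_def F_def pochhammer_rec' algebra_simps)
  ultimately show ?thesis
    unfolding hyp2F1_leg_coeff_def A_def[symmetric] B_def[symmetric] C_def[symmetric] F_def[symmetric]
    using nz by (simp add: divide_simps) algebra
qed

lemma hyp2F1_leg_holomorphic: "hyp2F1_leg l m holomorphic_on A"
  unfolding hyp2F1_leg_def by (intro holomorphic_intros)

lemma hyp2F1_leg_deriv_relation:
  "(x - 1) * deriv (hyp2F1_leg l m) x - of_nat m * hyp2F1_leg l m x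
   = (of_nat l - of_nat m) * (of_nat l + of_nat m + 1) / (of_nat m + 1) * hyp2F1_leg l (Suc m) x"
proof -
  let ?c = "hyp2F1_leg_coeff l m"
  define D where "D = (\<Sum>j\<le>l. (of_nat j + 1) * ?c (Suc j) * x^j)"
  have "hyp2F1_leg l m = (\<lambda>x. \<Sum>j\<le>Suc l. ?c j * x^j)"
    by (intro ext hyp2F1_leg_eq_sum le_SucI le_refl)
  then have "(hyp2F1_leg l m has_field_derivative (\<Sum>j\<le>Suc l. ?c j * (of_nat j * (1 * x^(j - Suc 0))))) (at x)"
    by (simp only:) (intro DERIV_sum DERIV_cmult DERIV_power DERIV_ident)
  also have "(\<Sum>j\<le>Suc l. ?c j * (of_nat j * (1 * x^(j - Suc 0)))) = D"
    by (subst sum.atMost_Suc_shift) (simp add: D_def algebra_simps)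
  finally have deriv_eq: "deriv (hyp2F1_leg l m) x = D"
    by (rule DERIV_imp_deriv)
  have "x * D = (\<Sum>j\<le>Suc l. of_nat j * ?c j * x^j)"
    by (subst sum.atMost_Suc_shift) (simp add: D_def sum_distrib_left algebra_simps)
  also have "\<dots> = (\<Sum>j\<le>l. of_nat j * ?c j * x^j)"
    by (simp add: hyp2F1_leg_coeff_eq_0)
  finally have xD: "x * D = (\<Sum>j\<le>l. of_nat j * ?c j * x^j)" .
  have "(x - 1) * D - of_nat m * hyp2F1_leg l m x = x * D - D - of_nat m * hyp2F1_leg l m x"
    by (simp add: algebra_simps)
  also have "\<dots> = (\<Sum>j\<le>l. (of_nat j * ?c j - (of_nat j + 1) * ?c (Suc j) - of_nat m * ?c j) * x^j)"
    unfolding xD unfolding D_def hyp2F1_leg_eq_sum[of l l, OF le_refl] sum_distrib_left sum_subtractf[symmetric]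
    by (intro sum.cong) (simp_all add: algebra_simps)
  also have "\<dots> = (of_nat l - of_nat m) * (of_nat l + of_nat m + 1) / (of_nat m + 1) * hyp2F1_leg l (Suc m) x"
    by (simp add: hyp2F1_leg_coeff_deriv hyp2F1_leg_eq_sum[of l l] sum_distrib_left mult.assoc)
  finally show ?thesis
    by (simp only: deriv_eq)
qed

section \<open>Legendre polynomials as hypergeometric series\<close>

lemma hyp2F1_leg_coeff_bonnet:
  "(of_nat l + 2) * hyp2F1_leg_coeff (Suc (Suc l)) 0 (Suc j)
   = (2 * of_nat l + 3) * (hyp2F1_leg_coeff (Suc l) 0 (Suc j) - 2 * hyp2F1_leg_coeff (Suc l) 0 j)
     - (of_nat l + 1) * hyp2F1_leg_coeff l 0 (Suc j)"
proof -
  have coeff: "hyp2F1_leg_coeff k 0 i = pochhammer (- of_nat k) i * pochhammer (of_nat k + 1) i / (of_nat (fact i))^2" for k i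
    by (simp add: hyp2F1_leg_coeff_def pochhammer_fact[symmetric] power2_eq_square)
  show ?thesis
  proof (cases j)
    case 0
    then show ?thesis by (simp add: coeff algebra_simps)
  next
    case (Suc i)
    define L where "L = (of_nat l :: complex)"
    define I where "I = (of_nat i :: complex)"
    define X where "X = pochhammer (- of_nat l :: complex) i"
    define Y where "Y = pochhammer (of_nat l + 3 :: complex) i"
    define F where "F = (of_nat (fact i) :: complex)"
    have "pochhammer (- of_nat (Suc (Suc l))) (Suc (Suc i)) = (-(L+2))*((-(L+1))*X)"
      "pochhammer (- of_nat (Suc l)) (Suc i) = (-(L+1))*X"
      "pochhammer (of_nat (Suc l) + 1) (Suc i) = (L+2)*Y"
      "pochhammer (of_nat l + 1) (Suc (Suc i)) = (L+1)*((L+2)*Y)"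
      unfolding X_def Y_def L_def by (simp_all add: pochhammer_rec algebra_simps)
    moreover have "pochhammer (- of_nat (Suc l)) (Suc (Suc i)) = (-(L+1))*((I - L)*X)"
      "pochhammer (of_nat (Suc l) + 1) (Suc (Suc i)) = (L+2)*((L+3+I)*Y)"
      unfolding X_def Y_def L_def I_def by (subst pochhammer_rec, subst pochhammer_rec', simp add: algebra_simps)+
    moreover have "pochhammer (- of_nat l) (Suc (Suc i)) = (I + 1 - L)*((I-L)*X)"
      "pochhammer (of_nat (Suc (Suc l)) + 1) (Suc (Suc i)) = (L+4+I)*((L+3+I)*Y)"
      unfolding X_def Y_def L_def I_def by (subst pochhammer_rec', subst pochhammer_rec', simp add: algebra_simps)+
    moreover have "of_nat (fact (Suc (Suc i))) = (I+2)*((I+1)*F)" "of_nat (fact (Suc i)) = (I+1)*F"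
      unfolding F_def I_def by (simp_all add: algebra_simps)
    moreover have "F \<noteq> 0" "I + 1 \<noteq> 0" "I + 2 \<noteq> 0"
      by (simp_all add: F_def I_def complex_eq_iff)
    ultimately show ?thesis
      unfolding Suc coeff L_def[symmetric] by (simp add: divide_simps) algebra
  qed
qed

lemma hyp2F1_leg_bonnet:
  "(of_nat l + 2) * hyp2F1_leg (Suc (Suc l)) 0 ((1 - z)/2)
   = (2 * of_nat l + 3) * z * hyp2F1_leg (Suc l) 0 ((1 - z)/2) - (of_nat l + 1) * hyp2F1_leg l 0 ((1 - z)/2)"
proof -
  define x where "x = (1 - z)/2"
  define N where "N = Suc (Suc l)"
  let ?c = "\<lambda>k. hyp2F1_leg_coeff k 0"
  define S where "S k = (\<Sum>j\<le>N. ?c k (Suc j) * x^Suc j)" for k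
  have "?c k 0 = 1" for k
    by (simp add: hyp2F1_leg_coeff_def)
  then have F: "hyp2F1_leg k 0 x = 1 + S k" if "k \<le> Suc N" for k
    using hyp2F1_leg_eq_sum[OF that] by (simp add: S_def sum.atMost_Suc_shift del: sum.atMost_Suc)
  have xF: "x * hyp2F1_leg (Suc l) 0 x = (\<Sum>j\<le>N. ?c (Suc l) j * x^Suc j)"
    by (simp add: hyp2F1_leg_eq_sum[of "Suc l" N] N_def sum_distrib_left algebra_simps del: sum.atMost_Suc)
  have z: "z = 1 - 2 * x"
    by (simp add: x_def field_simps)
  have "(2 * of_nat l + 3) * z * hyp2F1_leg (Suc l) 0 x - (of_nat l + 1) * hyp2F1_leg l 0 x
      = (of_nat l + 2) + ((2 * of_nat l + 3) * (S (Suc l) - 2 * (\<Sum>j\<le>N. ?c (Suc l) j * x^Suc j)) - (of_nat l + 1) * S l)"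
    unfolding z xF[symmetric] by (simp add: F N_def algebra_simps)
  also have "(2 * of_nat l + 3) * (S (Suc l) - 2 * (\<Sum>j\<le>N. ?c (Suc l) j * x^Suc j)) - (of_nat l + 1) * S l
      = (\<Sum>j\<le>N. ((2 * of_nat l + 3) * (?c (Suc l) (Suc j) - 2 * ?c (Suc l) j) - (of_nat l + 1) * ?c l (Suc j)) * x^Suc j)"
    unfolding S_def sum_distrib_left sum_subtractf[symmetric] by (rule sum.cong) (simp_all add: algebra_simps)
  also have "\<dots> = (of_nat l + 2) * S (Suc (Suc l))"
    unfolding S_def sum_distrib_left hyp2F1_leg_coeff_bonnet[symmetric] by (simp add: mult.assoc)
  finally show ?thesis
    unfolding x_def[symmetric] by (simp add: F N_def algebra_simps)
qed

definition legendre_coeff :: "nat \<Rightarrow> nat \<Rightarrow> complex" where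
  "legendre_coeff l k = (if 2*k \<le> l then (-1)^k * of_nat (fact (2*l - 2*k))
      / (2^l * of_nat (fact k) * of_nat (fact (l - k)) * of_nat (fact (l - 2*k))) else 0)"

lemma legendreP_eq_sum: "l div 2 \<le> N \<Longrightarrow> legendreP l z = (\<Sum>k\<le>N. legendre_coeff l k * z^(l - 2*k))"
proof -
  assume "l div 2 \<le> N"
  then have "(\<Sum>k\<le>N. legendre_coeff l k * z^(l - 2*k)) = (\<Sum>k\<le>l div 2. legendre_coeff l k * z^(l - 2*k))"
    by (intro sum.mono_neutral_right) (auto simp: legendre_coeff_def)
  also have "\<dots> = legendreP l z"
    unfolding legendreP_def by (intro sum.cong) (auto simp: legendre_coeff_def)
  finally show ?thesis by simp
qed

lemma legendre_coeff_bonnet_0: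
  "(of_nat l + 2) * legendre_coeff (Suc (Suc l)) 0 = (2 * of_nat l + 3) * legendre_coeff (Suc l) 0"
proof -
  define A where "A = (of_nat (fact (2*l)) :: complex)"
  define B where "B = (of_nat (fact l) :: complex)"
  define L where "L = (of_nat l :: complex)"
  have "(of_nat (fact (2 * Suc (Suc l))) :: complex) = (2*L+4)*((2*L+3)*((2*L+2)*((2*L+1)*A)))"
    "(of_nat (fact (2 * Suc l)) :: complex) = (2*L+2)*((2*L+1)*A)"
    "(of_nat (fact (Suc (Suc l))) :: complex) = (L+2)*((L+1)*B)"
    "(of_nat (fact (Suc l)) :: complex) = (L+1)*B"
    unfolding A_def B_def L_def by (simp_all add: algebra_simps)
  moreover have "B \<noteq> 0" "L + 1 \<noteq> 0" "L + 2 \<noteq> 0"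
    by (simp_all add: B_def L_def complex_eq_iff)
  ultimately show ?thesis
    unfolding legendre_coeff_def L_def[symmetric] by (simp add: divide_simps) algebra
qed

lemma legendre_coeff_bonnet:
  "(of_nat l + 2) * legendre_coeff (Suc (Suc l)) (Suc k)
   = (2 * of_nat l + 3) * legendre_coeff (Suc l) (Suc k) - (of_nat l + 1) * legendre_coeff l k"
proof -
  consider (odd_gap) "2*k + 1 \<le> l" | (even) "l = 2*k" | (small) "l < 2*k"
    by linarith
  then show ?thesis
  proof cases
    case odd_gap
    then obtain r where odd_gap: "l = 2*k + 1 + r"
      by (metis le_add_diff_inverse)
    define A where "A = (of_nat (fact (2*k + 2*r + 2)) :: complex)"
    define B where "B = (of_nat (fact k) :: complex)"
    define C where "C = (of_nat (fact (k + r + 1)) :: complex)"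
    define D where "D = (of_nat (fact r) :: complex)"
    define K where "K = (of_nat k :: complex)"
    define R where "R = (of_nat r :: complex)"
    define P where "P = (2::complex)^l"
    from odd_gap have idx: "2 * Suc (Suc l) - 2 * Suc k = Suc (Suc (2*k + 2*r + 2))"
      "Suc (Suc l) - Suc k = Suc (k + r + 1)" "Suc (Suc l) - 2 * Suc k = Suc r"
      "2 * Suc l - 2 * Suc k = 2*k + 2*r + 2" "Suc l - Suc k = k + r + 1" "Suc l - 2 * Suc k = r"
      "2 * l - 2 * k = 2*k + 2*r + 2" "l - k = k + r + 1" "l - 2 * k = Suc r"
      "2 * Suc k \<le> Suc (Suc l)" "2 * Suc k \<le> Suc l" "2 * k \<le> l"
      by simp_all
    have facts: "(of_nat (fact (Suc (Suc (2*k + 2*r + 2)))) :: complex) = (2*K+2*R+4)*((2*K+2*R+3)*A)"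
      "(of_nat (fact (Suc (k + r + 1))) :: complex) = (K+R+2)*C"
      "(of_nat (fact (Suc r)) :: complex) = (R+1)*D"
      "(of_nat (fact (Suc k)) :: complex) = (K+1)*B"
      unfolding A_def B_def C_def D_def K_def R_def by (simp_all add: algebra_simps)
    have powers: "(2::complex)^Suc (Suc l) = 4*P" "(2::complex)^Suc l = 2*P"
      unfolding P_def by simp_all
    have L: "(of_nat l :: complex) = 2*K + 1 + R"
      unfolding K_def R_def odd_gap by simp
    have "A \<noteq> 0" "B \<noteq> 0" "C \<noteq> 0" "D \<noteq> 0"
      unfolding A_def B_def C_def D_def of_nat_fact by (rule fact_nonzero)+
    moreover have "P \<noteq> 0" "K + 1 \<noteq> 0" "R + 1 \<noteq> 0" "K + R + 2 \<noteq> 0"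
      unfolding P_def K_def R_def by (simp_all add: complex_eq_iff)
    ultimately show ?thesis
      unfolding legendre_coeff_def
      by (simp only: idx if_True facts powers L A_def[symmetric] B_def[symmetric] C_def[symmetric] D_def[symmetric]
            P_def[symmetric] power_Suc)
        (simp add: divide_simps, algebra)
  next
    case even
    define A where "A = (of_nat (fact (2*k)) :: complex)"
    define B where "B = (of_nat (fact k) :: complex)"
    define K where "K = (of_nat k :: complex)"
    define P where "P = (2::complex)^l"
    from even have idx: "2 * Suc (Suc l) - 2 * Suc k = Suc (Suc (2*k))"
      "Suc (Suc l) - Suc k = Suc k" "Suc (Suc l) - 2 * Suc k = 0"
      "2 * l - 2 * k = 2*k" "l - k = k" "l - 2 * k = 0"
      "2 * Suc k \<le> Suc (Suc l)" "\<not> 2 * Suc k \<le> Suc l" "2 * k \<le> l"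
      by simp_all
    have facts: "(of_nat (fact (Suc (Suc (2*k)))) :: complex) = (2*K+2)*((2*K+1)*A)"
      "(of_nat (fact (Suc k)) :: complex) = (K+1)*B"
      unfolding A_def B_def K_def by (simp_all add: algebra_simps)
    have powers: "(2::complex)^Suc (Suc l) = 4*P"
      unfolding P_def by simp
    have L: "(of_nat l :: complex) = 2*K"
      unfolding K_def even by simp
    have "A \<noteq> 0" "B \<noteq> 0"
      unfolding A_def B_def of_nat_fact by (rule fact_nonzero)+
    moreover have "P \<noteq> 0" "K + 1 \<noteq> 0"
      unfolding P_def K_def by (simp_all add: complex_eq_iff)
    ultimately show ?thesis
      unfolding legendre_coeff_def
      by (simp only: idx if_True if_False facts powers L A_def[symmetric] B_def[symmetric] fact_0 of_nat_1
            P_def[symmetric] power_Suc)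
        (simp add: divide_simps, algebra)
  next
    case small
    then show ?thesis
      unfolding legendre_coeff_def by simp
  qed
qed

lemma legendreP_bonnet:
  "(of_nat l + 2) * legendreP (Suc (Suc l)) z
   = (2 * of_nat l + 3) * z * legendreP (Suc l) z - (of_nat l + 1) * legendreP l z"
proof -
  let ?b = legendre_coeff
  define w where "w k = z^(Suc (Suc l) - 2 * Suc k)" for k
  have shift: "?b j k * z^(j - 2*k) * z = ?b j k * z^(Suc j - 2*k)" for j k
    by (cases "2*k \<le> j") (auto simp: legendre_coeff_def Suc_diff_le)
  have P2: "legendreP (Suc (Suc l)) z = ?b (Suc (Suc l)) 0 * z^Suc (Suc l) + (\<Sum>k\<le>l. ?b (Suc (Suc l)) (Suc k) * w k)"
    using legendreP_eq_sum[of "Suc (Suc l)" "Suc l" z] by (simp add: w_def sum.atMost_Suc_shift del: sum.atMost_Suc)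
  have "legendreP (Suc l) z = (\<Sum>k\<le>Suc l. ?b (Suc l) k * z^(Suc l - 2*k))"
    by (rule legendreP_eq_sum) simp
  then have "z * legendreP (Suc l) z = (\<Sum>k\<le>Suc l. z * (?b (Suc l) k * z^(Suc l - 2*k)))"
    by (simp only: sum_distrib_left)
  also have "\<dots> = (\<Sum>k\<le>Suc l. ?b (Suc l) k * z^(Suc (Suc l) - 2*k))"
    by (intro sum.cong refl) (metis shift mult.commute)
  also have "\<dots> = ?b (Suc l) 0 * z^Suc (Suc l) + (\<Sum>k\<le>l. ?b (Suc l) (Suc k) * w k)"
    unfolding w_def by (subst sum.atMost_Suc_shift) simp
  finally have P1: "z * legendreP (Suc l) z = ?b (Suc l) 0 * z^Suc (Suc l) + (\<Sum>k\<le>l. ?b (Suc l) (Suc k) * w k)" .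
  have P0: "legendreP l z = (\<Sum>k\<le>l. ?b l k * w k)"
    using legendreP_eq_sum[of l l z] by (simp add: w_def)
  have "(2 * of_nat l + 3) * z * legendreP (Suc l) z - (of_nat l + 1) * legendreP l z
      = (2 * of_nat l + 3) * ?b (Suc l) 0 * z^Suc (Suc l)
        + (\<Sum>k\<le>l. ((2 * of_nat l + 3) * ?b (Suc l) (Suc k) - (of_nat l + 1) * ?b l k) * w k)"
    unfolding mult.assoc[of _ z] P1 P0
    by (simp add: sum_distrib_left sum.distrib sum_subtractf algebra_simps)
  also have "\<dots> = (of_nat l + 2) * legendreP (Suc (Suc l)) z"
    unfolding P2 legendre_coeff_bonnet_0[symmetric] legendre_coeff_bonnet[symmetric]
    by (simp add: sum_distrib_left algebra_simps)
  finally show ?thesis ..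
qed

lemma legendreP_eq_hyp2F1_leg: "legendreP l z = hyp2F1_leg l 0 ((1 - z)/2)"
proof (induction l rule: induct_nat_012)
  case 0
  then show ?case by (simp add: legendreP_def hyp2F1_leg_def)
next
  case 1
  then show ?case by (simp add: legendreP_def hyp2F1_leg_def field_simps)
next
  case (ge2 l)
  have "(of_nat l + 2) * legendreP (Suc (Suc l)) z = (of_nat l + 2) * hyp2F1_leg (Suc (Suc l)) 0 ((1 - z)/2)"
    unfolding legendreP_bonnet hyp2F1_leg_bonnet ge2.IH ..
  moreover have "(of_nat l + 2 :: complex) \<noteq> 0"
    by (simp add: complex_eq_iff)
  ultimately show ?case
    by simp
qed

lemma legendreP_minus: "legendreP l (-z) = (-1)^l * legendreP l z"
  unfolding legendreP_def sum_distrib_left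
proof (intro sum.cong refl)
  fix k assume "k \<in> {..l div 2}"
  then have "(-1::complex)^(l - 2*k) = (-1)^l"
    by (auto simp: minus_one_power_iff)
  then show "(-1)^k * of_nat (fact (2*l - 2*k)) / (2^l * of_nat (fact k) * of_nat (fact (l - k)) * of_nat (fact (l - 2*k))) * (-z)^(l - 2*k)
     = (-1)^l * ((-1)^k * of_nat (fact (2*l - 2*k)) / (2^l * of_nat (fact k) * of_nat (fact (l - k)) * of_nat (fact (l - 2*k))) * z^(l - 2*k))"
    by (simp add: power_minus[of z])
qed

lemma hyp2F1_leg_signed_eq_legendreP:
  "e = 1 \<or> e = -1 \<Longrightarrow> hyp2F1_leg l 0 ((1 - e*z)/2) = e^l * legendreP l z"
  by (auto simp: legendreP_eq_hyp2F1_leg[symmetric] legendreP_minus simp flip: legendreP_eq_hyp2F1_leg[of l "-z"])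

section \<open>Associated Legendre functions of negative order\<close>

(* For e = 1 or e = -1 this is (z^2 - 1)^(-m/2) P_l^(-m)(e z) of the statement, whose fractional
   powers cancel. *)
definition scaled_legendre_neg :: "complex \<Rightarrow> nat \<Rightarrow> nat \<Rightarrow> complex \<Rightarrow> complex" where
  "scaled_legendre_neg e l m z = hyp2F1_leg l m ((1 - e*z)/2) / (of_nat (fact m) * (z + e)^m)"

lemma scaled_legendre_neg_0:
  "e = 1 \<or> e = -1 \<Longrightarrow> scaled_legendre_neg e l 0 z = e^l * legendreP l z"
  by (simp add: scaled_legendre_neg_def hyp2F1_leg_signed_eq_legendreP)

lemma powr_half_branch_cancel:
  fixes u v :: complex
  assumes "u \<noteq> 0" "v \<noteq> 0"
  shows "(u powr (- (of_nat m / 2)) * v powr (- (of_nat m / 2))) * (u powr (of_nat m / 2) * v powr (- (of_nat m / 2)))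
    = inverse (v^m)"
proof -
  have "u powr (- (of_nat m / 2)) * u powr (of_nat m / 2) = 1"
    using assms(1) by (simp add: powr_add[symmetric])
  moreover have "v powr (- (of_nat m / 2)) * v powr (- (of_nat m / 2)) = v powr (- of_nat m)"
    by (simp add: powr_add[symmetric])
  moreover have "v powr (- of_nat m) = inverse (v^m)"
    using assms(2) by (simp add: powr_minus powr_nat')
  ultimately show ?thesis
    by (simp add: ac_simps)
qed

lemma branch_factor_mult_legendreP_neg_signed:
  assumes "z - 1 \<noteq> 0" "z + 1 \<noteq> 0" and eps: "eps \<in> {1, -1}"
  shows "((z - 1) powr (- (of_nat m / 2)) * (z + 1) powr (- (of_nat m / 2))) * legendreP_neg_signed l m eps z
    = scaled_legendre_neg (of_int eps) l m z"
  using powr_half_branch_cancel[OF assms(1,2)] powr_half_branch_cancel[OF assms(2,1)] eps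
  by (auto simp: legendreP_neg_signed_def scaled_legendre_neg_def field_simps mult.commute[of "(z + 1) powr _"])

lemma has_field_derivative_inverse_mult_power:
  fixes c e z :: complex
  assumes "c \<noteq> 0" and "z + e \<noteq> 0"
  shows "((\<lambda>z. inverse (c * (z + e)^m)) has_field_derivative - of_nat m * inverse (c * (z + e)^Suc m)) (at z)"
proof -
  have "((\<lambda>z. c * (z + e)^m) has_field_derivative c * (of_nat m * (z + e)^(m - 1))) (at z)"
    by (rule derivative_eq_intros refl | simp)+
  then have "((\<lambda>z. inverse (c * (z + e)^m)) has_field_derivative
      - (c * (of_nat m * (z + e)^(m - 1)) * inverse ((c * (z + e)^m)^Suc (Suc 0)))) (at z)"
    by (rule DERIV_inverse_fun) (use assms in simp)
  moreover have "- (c * (of_nat m * w^(m - 1)) * inverse ((c * w^m)^Suc (Suc 0))) = - of_nat m * inverse (c * w^Suc m)"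
    if "w \<noteq> 0" for w
    using that assms(1) by (cases m) (simp_all add: field_simps)
  ultimately show ?thesis
    using assms(2) by (blast intro: DERIV_cong)
qed

lemma has_field_derivative_scaled_legendre_neg:
  assumes e: "e = 1 \<or> e = -1" and z: "z + e \<noteq> 0"
  shows "(scaled_legendre_neg e l m has_field_derivative
           (of_nat l - of_nat m) * (of_nat l + of_nat m + 1) * scaled_legendre_neg e l (Suc m) z) (at z)"
proof -
  define x where "x = (1 - e*z)/2"
  define F' where "F' = deriv (hyp2F1_leg l m) x"
  have "((\<lambda>z. hyp2F1_leg l m ((1 - e*z)/2)) has_field_derivative F' * (- e/2)) (at z)"
    unfolding F'_def x_def
    by (rule DERIV_chain2[OF holomorphic_derivI[OF hyp2F1_leg_holomorphic open_UNIV UNIV_I]])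
       (auto intro!: derivative_eq_intros)
  moreover have "((\<lambda>z. inverse (of_nat (fact m) * (z + e)^m)) has_field_derivative
      - of_nat m * inverse (of_nat (fact m) * (z + e)^Suc m)) (at z)"
    using z by (intro has_field_derivative_inverse_mult_power) simp_all
  ultimately have "(scaled_legendre_neg e l m has_field_derivative
      F' * (- e/2) * inverse (of_nat (fact m) * (z + e)^m)
      + - of_nat m * inverse (of_nat (fact m) * (z + e)^Suc m) * hyp2F1_leg l m x) (at z)"
    unfolding scaled_legendre_neg_def divide_inverse x_def by (rule DERIV_mult)
  also have "F' * (- e/2) * inverse (of_nat (fact m) * (z + e)^m)
      + - of_nat m * inverse (of_nat (fact m) * (z + e)^Suc m) * hyp2F1_leg l m x
      = ((x - 1) * F' - of_nat m * hyp2F1_leg l m x) / (of_nat (fact m) * (z + e)^Suc m)"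
  proof -
    have "x - 1 = - e/2 * (z + e)"
      using e by (auto simp: x_def field_simps)
    moreover have "F' * (- e/2) * inverse (c * w^m) + - of_nat m * inverse (c * w^Suc m) * H
        = (- e/2 * w * F' - of_nat m * H) / (c * w^Suc m)" if "w \<noteq> 0" "c \<noteq> 0" for w c H :: complex
      using that by (simp add: field_simps)
    ultimately show ?thesis
      using z by simp
  qed
  also have "\<dots> = (of_nat l - of_nat m) * (of_nat l + of_nat m + 1) * scaled_legendre_neg e l (Suc m) z"
    unfolding F'_def hyp2F1_leg_deriv_relation
    by (simp add: scaled_legendre_neg_def x_def field_simps complex_eq_iff)
  finally show ?thesis .
qed

definition fact_ratio :: "nat \<Rightarrow> nat \<Rightarrow> complex" where
  "fact_ratio n m = of_nat (fact (n + m)) / of_nat (fact (n - m))"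

lemma fact_ratio_Suc:
  "Suc m \<le> n \<Longrightarrow> fact_ratio n (Suc m) = fact_ratio n m * ((of_nat n - of_nat m) * (of_nat n + of_nat m + 1))"
proof -
  assume "Suc m \<le> n"
  then have "n - m = Suc (n - Suc m)" and "(of_nat (Suc (n - Suc m)) :: complex) = of_nat n - of_nat m"
    by (simp_all add: of_nat_diff)
  then have f1: "(of_nat (fact (n - m)) :: complex) = (of_nat n - of_nat m) * of_nat (fact (n - Suc m))"
    by (simp only: fact_Suc of_nat_id of_nat_mult)
  have f2: "(of_nat (fact (n + Suc m)) :: complex) = (of_nat n + of_nat m + 1) * of_nat (fact (n + m))"
    by (simp add: algebra_simps)
  have "(of_nat n - of_nat m :: complex) \<noteq> 0"
    using \<open>Suc m \<le> n\<close> by simp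
  then show ?thesis
    unfolding fact_ratio_def f1 f2 by (simp add: field_simps)
qed

lemma higher_deriv_legendreP_eq_scaled_legendre_neg:
  assumes e: "e = 1 \<or> e = -1" and "m \<le> l" and "z + e \<noteq> 0"
  shows "(deriv ^^ m) (legendreP l) z = e^l * fact_ratio l m * scaled_legendre_neg e l m z"
  using assms(2,3)
proof (induction m arbitrary: z)
  case 0
  have "e^l * e^l = 1"
    using e by (auto simp: power_mult_distrib[symmetric])
  then show ?case
    using scaled_legendre_neg_0[OF e] by (simp add: fact_ratio_def mult.assoc[symmetric])
next
  case (Suc m)
  have "z \<noteq> - e"
    using Suc.prems(2) by (simp add: add_eq_0_iff2)
  then have "\<forall>\<^sub>F w in nhds z. w \<noteq> - e"
    by (rule t1_space_nhds)
  then have "\<forall>\<^sub>F w in nhds z. (deriv ^^ m) (legendreP l) w = e^l * fact_ratio l m * scaled_legendre_neg e l m w"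
    by eventually_elim (use Suc in \<open>auto simp: add_eq_0_iff2\<close>)
  then have "(deriv ^^ Suc m) (legendreP l) z = deriv (\<lambda>w. e^l * fact_ratio l m * scaled_legendre_neg e l m w) z"
    by (simp add: deriv_cong_ev)
  also have "\<dots> = e^l * fact_ratio l m * ((of_nat l - of_nat m) * (of_nat l + of_nat m + 1) * scaled_legendre_neg e l (Suc m) z)"
    by (intro DERIV_imp_deriv DERIV_cmult has_field_derivative_scaled_legendre_neg e Suc.prems(2))
  also have "\<dots> = e^l * fact_ratio l (Suc m) * scaled_legendre_neg e l (Suc m) z"
    using fact_ratio_Suc[OF Suc.prems(1)] by (simp add: ac_simps)
  finally show ?case .
qed

lemma scaled_legendre_neg_eq_higher_deriv:
  assumes e: "e = 1 \<or> e = -1" and "m \<le> l" and "z + e \<noteq> 0"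
  shows "scaled_legendre_neg e l m z = e^l * of_nat (fact (l - m)) / of_nat (fact (l + m)) * (deriv ^^ m) (legendreP l) z"
proof -
  have "e^l * e^l = 1"
    using e by (auto simp: power_mult_distrib[symmetric])
  then show ?thesis
    unfolding higher_deriv_legendreP_eq_scaled_legendre_neg[OF assms] fact_ratio_def
    by (simp add: field_simps)
qed

lemma higher_deriv_legendreP_div:
  assumes e: "e = 1 \<or> e = -1" and "m < n" and z: "z + e \<noteq> 0"
  shows "(deriv ^^ m) (legendreP n) z / (z + e)
     = (deriv ^^ Suc m) (legendreP n) z / (of_nat n - of_nat m)
       + (-e)^n * fact_ratio n m * (\<Sum>l<n. (-1)^l * (2 * of_nat l + 1) * scaled_legendre_neg e l (Suc m) z)"
proof -
  define x where "x = (1 - e*z)/2"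
  define F0 where "F0 = hyp2F1_leg n m x"
  define F1 where "F1 = hyp2F1_leg n (Suc m) x"
  define X where "X = z + e"
  define E where "E = e^n"
  define A where "A = fact_ratio n m"
  define M where "M = (of_nat (fact m) :: complex)"
  have fact_Suc_m: "(of_nat (fact (Suc m)) :: complex) = (of_nat m + 1) * M"
    by (simp add: M_def algebra_simps)
  have P0: "(deriv ^^ m) (legendreP n) z = E * A * F0 / (M * X^m)"
    using higher_deriv_legendreP_eq_scaled_legendre_neg[OF e _ z, of m n] \<open>m < n\<close>
    by (simp add: scaled_legendre_neg_def E_def A_def F0_def x_def M_def X_def)
  have P1: "(deriv ^^ Suc m) (legendreP n) z
      = E * A * ((of_nat n - of_nat m) * (of_nat n + of_nat m + 1)) * F1 / ((of_nat m + 1) * M * X^Suc m)"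
    using higher_deriv_legendreP_eq_scaled_legendre_neg[OF e _ z, of "Suc m" n] \<open>m < n\<close>
    by (simp add: scaled_legendre_neg_def fact_ratio_Suc E_def A_def F1_def x_def X_def M_def algebra_simps)
  have "(-e)^n * A * (\<Sum>l<n. (-1)^l * (2 * of_nat l + 1) * scaled_legendre_neg e l (Suc m) z)
      = E * A * ((-1)^n * (\<Sum>l<n. (-1)^l * (2 * of_nat l + 1) * hyp2F1_leg l (Suc m) x)) / ((of_nat m + 1) * M * X^Suc m)"
    unfolding scaled_legendre_neg_def fact_Suc_m x_def[symmetric] X_def[symmetric] power_minus[of e]
      E_def[symmetric] times_divide_eq_right sum_divide_distrib[symmetric]
    by (simp add: ac_simps)
  also have "\<dots> = E * A * ((of_nat m + 1) * F0 - (of_nat n + of_nat m + 1) * F1) / ((of_nat m + 1) * M * X^Suc m)"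
    unfolding F0_def F1_def hyp2F1_leg_contiguous_sum ..
  finally have S: "(-e)^n * A * (\<Sum>l<n. (-1)^l * (2 * of_nat l + 1) * scaled_legendre_neg e l (Suc m) z)
      = E * A * ((of_nat m + 1) * F0 - (of_nat n + of_nat m + 1) * F1) / ((of_nat m + 1) * M * X^Suc m)" .
  have "E * A * F0 / (M * X^m) / X = E * A * (d * k) * F1 / (a * M * X^Suc m) / d + E * A * (a * F0 - k * F1) / (a * M * X^Suc m)"
    if "X \<noteq> 0" "M \<noteq> 0" "a \<noteq> 0" "d \<noteq> 0" for a d k :: complex
    using that by (simp add: field_simps)
  moreover have "X \<noteq> 0" "M \<noteq> 0" "(of_nat m + 1 :: complex) \<noteq> 0" "(of_nat n - of_nat m :: complex) \<noteq> 0"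
    using z \<open>m < n\<close> by (simp_all add: X_def M_def complex_eq_iff)
  ultimately show ?thesis
    unfolding P0 P1 S A_def[symmetric] X_def[symmetric] by blast
qed

section \<open>The logarithmic term\<close>

definition legendre_log_weight :: "nat \<Rightarrow> nat \<Rightarrow> complex" where
  "legendre_log_weight n l = (2 * of_nat l + 1) / (of_nat (n - l) * of_nat (l + n + 1))"

lemma legendre_log_weight_mult:
  "l < n \<Longrightarrow> legendre_log_weight n l * ((of_nat n - of_nat l) * (of_nat n + of_nat l + 1)) = 2 * of_nat l + 1"
proof -
  assume "l < n"
  then have "(of_nat n - of_nat l) * (of_nat n + of_nat l + 1) = (of_nat (n - l) * of_nat (l + n + 1) :: complex)"
    and "(of_nat (n - l) * of_nat (l + n + 1) :: complex) \<noteq> 0"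
    by (simp add: of_nat_diff, simp add: complex_eq_iff)
  then show ?thesis
    unfolding legendre_log_weight_def by (simp add: add_ac)
qed

lemma fact_ratio_Suc_weighted_sum:
  assumes "m < n"
  shows "fact_ratio n (Suc m) * (\<Sum>l<n. (-1)^l * legendre_log_weight n l * G l)
    = fact_ratio n m * (\<Sum>l<n. (-1)^l * legendre_log_weight n l * ((of_nat l - of_nat m) * (of_nat l + of_nat m + 1) * G l))
      + fact_ratio n m * (\<Sum>l<n. (-1)^l * (2 * of_nat l + 1) * G l)"
proof -
  have split: "(of_nat n - of_nat m) * (of_nat n + of_nat m + 1)
      = (of_nat l - of_nat m) * (of_nat l + of_nat m + 1) + (of_nat n - of_nat l) * (of_nat n + of_nat l + (1::complex))" for l
    by algebra
  have weight: "legendre_log_weight n l * ((of_nat n - of_nat m) * (of_nat n + of_nat m + 1))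
      = legendre_log_weight n l * ((of_nat l - of_nat m) * (of_nat l + of_nat m + 1)) + (2 * of_nat l + 1)" if "l < n" for l
  proof -
    have "legendre_log_weight n l * ((of_nat n - of_nat m) * (of_nat n + of_nat m + 1))
        = legendre_log_weight n l * ((of_nat l - of_nat m) * (of_nat l + of_nat m + 1))
          + legendre_log_weight n l * ((of_nat n - of_nat l) * (of_nat n + of_nat l + 1))"
      unfolding split[of l] by (rule distrib_left)
    then show ?thesis
      by (simp only: legendre_log_weight_mult[OF that])
  qed
  show ?thesis
    unfolding fact_ratio_Suc[OF Suc_leI[OF assms]] sum_distrib_left sum.distrib[symmetric]
  proof (intro sum.cong refl)
    fix l assume "l \<in> {..<n}"
    then have "l < n" by simp
    have "A * K * (s * w * g) = A * (s * w * (k * g)) + A * (s * c * g)" if "w * K = w * k + c" for A K s w g k c :: complex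
      using that by algebra
    from this[OF weight[OF \<open>l < n\<close>]] show "fact_ratio n m * ((of_nat n - of_nat m) * (of_nat n + of_nat m + 1)) * ((-1)^l * legendre_log_weight n l * G l)
        = fact_ratio n m * ((-1)^l * legendre_log_weight n l * ((of_nat l - of_nat m) * (of_nat l + of_nat m + 1) * G l))
          + fact_ratio n m * ((-1)^l * (2 * of_nat l + 1) * G l)" .
  qed
qed

definition cut_plane :: "complex set" where
  "cut_plane = {z. \<not> (Im z = 0 \<and> Re z \<le> 1)}"

lemma open_cut_plane: "open cut_plane"
  unfolding cut_plane_def
  by (intro open_Collect_neg closed_Collect_conj closed_Collect_eq closed_Collect_le continuous_intros)

lemma cut_plane_shift_notin_nonpos_Reals:
  "z \<in> cut_plane \<Longrightarrow> e = 1 \<or> e = -1 \<Longrightarrow> z + e \<notin> \<real>\<^sub>\<le>\<^sub>0"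
  by (auto simp: cut_plane_def complex_nonpos_Reals_iff)

lemma cut_plane_shift_neq_0: "z \<in> cut_plane \<Longrightarrow> e = 1 \<or> e = -1 \<Longrightarrow> z + e \<noteq> 0"
  using cut_plane_shift_notin_nonpos_Reals by fastforce

(* The function R_m of the proof sketch above. *)
definition legendre_log_expansion :: "nat \<Rightarrow> complex \<Rightarrow> nat \<Rightarrow> complex \<Rightarrow> complex" where
  "legendre_log_expansion n e m z =
     (deriv ^^ m) (legendreP n) z * (Ln (z + e) + harm n - harm (n - m))
     + (-e)^n * fact_ratio n m * (\<Sum>l<n. (-1)^l * legendre_log_weight n l * scaled_legendre_neg e l m z)
     - (-e)^n * (\<Sum>l<n. (-e)^l * legendre_log_weight n l * (deriv ^^ m) (legendreP l) z)"

lemma legendre_log_expansion_0: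
  "e = 1 \<or> e = -1 \<Longrightarrow> legendre_log_expansion n e 0 z = legendreP n z * Ln (z + e)"
  by (simp add: legendre_log_expansion_def fact_ratio_def scaled_legendre_neg_0 power_minus[of e] ac_simps)

lemma harm_diff_Suc:
  "m < n \<Longrightarrow> harm (n - Suc m) = harm (n - m) - 1 / (of_nat n - of_nat m :: complex)"
proof -
  assume "m < n"
  then have "n - m = Suc (n - Suc m)" and "(of_nat (Suc (n - Suc m)) :: complex) = of_nat n - of_nat m"
    by (simp_all add: of_nat_diff)
  then show ?thesis
    by (simp add: harm_Suc divide_inverse)
qed

lemma has_field_derivative_legendre_log_expansion:
  assumes e: "e = 1 \<or> e = -1" and "m < n" and z: "z \<in> cut_plane"
  shows "(legendre_log_expansion n e m has_field_derivative legendre_log_expansion n e (Suc m) z) (at z)"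
proof -
  let ?P = "\<lambda>l k. (deriv ^^ k) (legendreP l) z"
  let ?G = "\<lambda>k l. scaled_legendre_neg e l k z"
  let ?w = "legendre_log_weight n"
  let ?A = "fact_ratio n m"
  define c :: complex where "c = harm n - harm (n - m)"
  have "z + e \<notin> \<real>\<^sub>\<le>\<^sub>0" "z + e \<noteq> 0"
    using z e by (simp_all add: cut_plane_shift_notin_nonpos_Reals cut_plane_shift_neq_0)
  then have "((\<lambda>z. Ln (z + e) + c) has_field_derivative inverse (z + e)) (at z)"
    by (auto intro!: derivative_eq_intros)
  then have deriv: "(legendre_log_expansion n e m has_field_derivative
      (?P n (Suc m) * (Ln (z + e) + c) + inverse (z + e) * ?P n m)
      + (-e)^n * ?A * (\<Sum>l<n. (-1)^l * ?w l * ((of_nat l - of_nat m) * (of_nat l + of_nat m + 1) * ?G (Suc m) l))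
      - (-e)^n * (\<Sum>l<n. (-e)^l * ?w l * ?P l (Suc m))) (at z)"
    unfolding legendre_log_expansion_def add_diff_eq[symmetric] c_def[symmetric]
    by (intro DERIV_diff DERIV_add DERIV_mult DERIV_cmult DERIV_sum has_field_derivative_higher_deriv_legendreP
        has_field_derivative_scaled_legendre_neg e \<open>z + e \<noteq> 0\<close>)
  have "legendre_log_expansion n e (Suc m) z
        = ?P n (Suc m) * (Ln (z + e) + c) + (?P n (Suc m) / (of_nat n - of_nat m)
          + (-e)^n * ?A * (\<Sum>l<n. (-1)^l * (2 * of_nat l + 1) * ?G (Suc m) l))
          + (-e)^n * ?A * (\<Sum>l<n. (-1)^l * ?w l * ((of_nat l - of_nat m) * (of_nat l + of_nat m + 1) * ?G (Suc m) l))
          - (-e)^n * (\<Sum>l<n. (-e)^l * ?w l * ?P l (Suc m))"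
    using fact_ratio_Suc_weighted_sum[OF \<open>m < n\<close>, of "?G (Suc m)"]
    by (simp add: legendre_log_expansion_def c_def harm_diff_Suc[OF \<open>m < n\<close>] algebra_simps)
  also have "\<dots> = ?P n (Suc m) * (Ln (z + e) + c) + inverse (z + e) * ?P n m
          + (-e)^n * ?A * (\<Sum>l<n. (-1)^l * ?w l * ((of_nat l - of_nat m) * (of_nat l + of_nat m + 1) * ?G (Suc m) l))
          - (-e)^n * (\<Sum>l<n. (-e)^l * ?w l * ?P l (Suc m))"
    using higher_deriv_legendreP_div[OF e \<open>m < n\<close> \<open>z + e \<noteq> 0\<close>] by (simp add: field_simps)
  finally show ?thesis
    using deriv by (simp add: DERIV_cong)
qed

lemma higher_deriv_legendreP_mult_Ln:
  assumes e: "e = 1 \<or> e = -1" and "m \<le> n" and "z \<in> cut_plane"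
  shows "(deriv ^^ m) (\<lambda>w. legendreP n w * Ln (w + e)) z = legendre_log_expansion n e m z"
  using assms(2,3)
proof (induction m arbitrary: z)
  case 0
  then show ?case by (simp add: legendre_log_expansion_0[OF e])
next
  case (Suc m)
  have "\<forall>\<^sub>F w in nhds z. (deriv ^^ m) (\<lambda>w. legendreP n w * Ln (w + e)) w = legendre_log_expansion n e m w"
    using eventually_nhds_in_open[OF open_cut_plane Suc.prems(2)] by eventually_elim (use Suc in auto)
  then have "(deriv ^^ Suc m) (\<lambda>w. legendreP n w * Ln (w + e)) z = deriv (legendre_log_expansion n e m) z"
    by (simp add: deriv_cong_ev)
  also have "\<dots> = legendre_log_expansion n e (Suc m) z"
    using Suc.prems by (intro DERIV_imp_deriv has_field_derivative_legendre_log_expansion e) simp_all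
  finally show ?case .
qed

lemma legendre_log_expansion_upper_terms:
  assumes e: "e = 1 \<or> e = -1" and "m \<le> n" and z: "z + e \<noteq> 0"
  shows "(-e)^n * fact_ratio n m * (\<Sum>l\<in>{m..<n}. (-1)^l * legendre_log_weight n l * scaled_legendre_neg e l m z)
      - (-e)^n * (\<Sum>l<n. (-e)^l * legendre_log_weight n l * (deriv ^^ m) (legendreP l) z)
    = - ((-e)^(n + m) * odd_double_fact m * (\<Sum>k<n - m. (-e)^k * (2 * of_nat k + 2 * of_nat m + 1)
          / (of_nat (n - m - k) * of_nat (k + n + m + 1))
          * (1 - of_nat (fact k * fact (n + m)) / of_nat (fact (k + 2*m) * fact (n - m)))
          * gegenbauerC k (of_nat m + 1/2) z))"
proof -
  let ?P = "\<lambda>l. (deriv ^^ m) (legendreP l) z"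
  let ?w = "legendre_log_weight n"
  let ?t = "\<lambda>l. (-e)^n * (-e)^l * ?w l * (1 - fact_ratio n m * of_nat (fact (l - m)) / of_nat (fact (l + m))) * ?P l"
  have "(\<Sum>l<n. (-e)^l * ?w l * ?P l) = (\<Sum>l\<in>{m..<n}. (-e)^l * ?w l * ?P l)"
    by (rule sum.mono_neutral_right) (auto simp: higher_deriv_legendreP_eq_0)
  then have "(-e)^n * fact_ratio n m * (\<Sum>l\<in>{m..<n}. (-1)^l * ?w l * scaled_legendre_neg e l m z)
      - (-e)^n * (\<Sum>l<n. (-e)^l * ?w l * ?P l) = - (\<Sum>l\<in>{m..<n}. ?t l)"
    by (simp add: scaled_legendre_neg_eq_higher_deriv[OF e _ z] power_minus[of e] sum_distrib_left
        sum_subtractf[symmetric] sum_negf[symmetric] algebra_simps)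
  also have "(\<Sum>l\<in>{m..<n}. ?t l) = (\<Sum>k<n - m. ?t (k + m))"
    using sum.shift_bounds_nat_ivl[of ?t 0 m "n - m"] \<open>m \<le> n\<close> by (simp add: atLeast0LessThan)
  also have "\<dots> = (-e)^(n + m) * odd_double_fact m * (\<Sum>k<n - m. (-e)^k * (2 * of_nat k + 2 * of_nat m + 1)
          / (of_nat (n - m - k) * of_nat (k + n + m + 1))
          * (1 - of_nat (fact k * fact (n + m)) / of_nat (fact (k + 2*m) * fact (n - m)))
          * gegenbauerC k (of_nat m + 1/2) z)"
    unfolding sum_distrib_left
  proof (intro sum.cong refl)
    fix k assume "k \<in> {..<n - m}"
    have "k + m - m = k" "k + m + m = k + 2*m"
      by simp_all
    then have "fact_ratio n m * of_nat (fact (k + m - m)) / of_nat (fact (k + m + m))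
        = of_nat (fact k * fact (n + m)) / of_nat (fact (k + 2*m) * fact (n - m))"
      by (simp only:) (simp add: fact_ratio_def field_simps)
    moreover have "?w (k + m) = (2 * of_nat k + 2 * of_nat m + 1) / (of_nat (n - m - k) * of_nat (k + n + m + 1))"
      by (simp add: legendre_log_weight_def algebra_simps)
    ultimately show "?t (k + m) = (-e)^(n + m) * odd_double_fact m * ((-e)^k * (2 * of_nat k + 2 * of_nat m + 1)
          / (of_nat (n - m - k) * of_nat (k + n + m + 1))
          * (1 - of_nat (fact k * fact (n + m)) / of_nat (fact (k + 2*m) * fact (n - m)))
          * gegenbauerC k (of_nat m + 1/2) z)"
      by (simp only:) (simp add: higher_deriv_legendreP power_add ac_simps)
  qed
  finally show ?thesis .
qed

lemma legendre_log_expansion_eq: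
  assumes "m \<le> n" and eps: "eps \<in> {1, -1}" and z: "z \<in> cut_plane"
  shows "legendre_log_expansion n (of_int eps) m z =
      odd_double_fact m * gegenbauerC (n - m) (of_nat m + 1/2) z * Ln (z + of_int eps)
    + odd_double_fact m * (Digamma (of_nat (n + 1)) - Digamma (of_nat (n - m + 1))) * gegenbauerC (n - m) (of_nat m + 1/2) z
    + (- of_int eps)^n * fact_ratio n m
        * ((z - 1) powr (- (of_nat m / 2)) * (z + 1) powr (- (of_nat m / 2)))
        * (\<Sum>k<m. (-1)^k * (2 * of_nat k + 1) / (of_nat (n - k) * of_nat (k + n + 1))
              * legendreP_neg_signed k m eps z)
    - (- of_int eps)^(n + m) * odd_double_fact m
        * (\<Sum>k<n - m. (- of_int eps)^k * (2 * of_nat k + 2 * of_nat m + 1)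
              / (of_nat (n - m - k) * of_nat (k + n + m + 1))
              * (1 - of_nat (fact k * fact (n + m)) / of_nat (fact (k + 2*m) * fact (n - m)))
              * gegenbauerC k (of_nat m + 1/2) z)"
proof -
  define e where "e = (of_int eps :: complex)"
  have e: "e = 1 \<or> e = -1"
    using eps by (auto simp: e_def)
  have "z + e \<noteq> 0" "z - 1 \<noteq> 0" "z + 1 \<noteq> 0"
    using cut_plane_shift_neq_0[OF z e] cut_plane_shift_neq_0[OF z, of "-1"] cut_plane_shift_neq_0[OF z, of 1]
    by simp_all
  let ?G = "\<lambda>l. (-1)^l * legendre_log_weight n l * scaled_legendre_neg e l m z"
  define W where "W = (z - 1) powr (- (of_nat m / 2)) * (z + 1) powr (- (of_nat m / 2))"
  define low where "low = (\<Sum>k<m. (-1)^k * (2 * of_nat k + 1) / (of_nat (n - k) * of_nat (k + n + 1)) * legendreP_neg_signed k m eps z)"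
  define high where "high = (\<Sum>k<n - m. (-e)^k * (2 * of_nat k + 2 * of_nat m + 1)
              / (of_nat (n - m - k) * of_nat (k + n + m + 1))
              * (1 - of_nat (fact k * fact (n + m)) / of_nat (fact (k + 2*m) * fact (n - m)))
              * gegenbauerC k (of_nat m + 1/2) z)"
  have "(\<Sum>l<m. ?G l) = W * low"
    unfolding W_def low_def sum_distrib_left e_def
    by (intro sum.cong refl)
      (simp add: legendre_log_weight_def branch_factor_mult_legendreP_neg_signed[OF \<open>z - 1 \<noteq> 0\<close> \<open>z + 1 \<noteq> 0\<close> eps, symmetric] ac_simps)
  then have "(\<Sum>l<n. ?G l) = W * low + (\<Sum>l\<in>{m..<n}. ?G l)"
    using sum.atLeastLessThan_concat[of 0 m n ?G] \<open>m \<le> n\<close> by (simp add: atLeast0LessThan)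
  then have "legendre_log_expansion n e m z
      = odd_double_fact m * gegenbauerC (n - m) (of_nat m + 1/2) z * (Ln (z + e) + (harm n - harm (n - m)))
        + (-e)^n * fact_ratio n m * W * low
        + ((-e)^n * fact_ratio n m * (\<Sum>l\<in>{m..<n}. ?G l)
           - (-e)^n * (\<Sum>l<n. (-e)^l * legendre_log_weight n l * (deriv ^^ m) (legendreP l) z))"
    by (simp add: legendre_log_expansion_def higher_deriv_legendreP[OF \<open>m \<le> n\<close>] algebra_simps)
  also have "harm n - harm (n - m) = (Digamma (of_nat (n + 1)) - Digamma (of_nat (n - m + 1)) :: complex)"
    by (simp only: Suc_eq_plus1[symmetric] Digamma_of_nat) simp
  also note legendre_log_expansion_upper_terms[OF e \<open>m \<le> n\<close> \<open>z + e \<noteq> 0\<close>]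
  finally show ?thesis
    unfolding e_def[symmetric] W_def[symmetric] low_def[symmetric] high_def[symmetric] by (simp add: algebra_simps)
qed

theorem mainTheorem5:
  fixes m n :: nat and eps :: int and z :: complex
  assumes "m \<le> n" and "eps \<in> {1, -1}" and "\<not> (Im z = 0 \<and> Re z \<le> 1)"
  shows "(deriv ^^ m) (\<lambda>w. legendreP n w * Ln (w + of_int eps)) z =
      of_nat (fact (2*m)) / (2^m * of_nat (fact m)) * gegenbauerC (n - m) (of_nat m + 1/2) z
        * Ln (z + of_int eps)
    + of_nat (fact (2*m)) / (2^m * of_nat (fact m))
        * (Digamma (of_nat (n + 1)) - Digamma (of_nat (n - m + 1)))
        * gegenbauerC (n - m) (of_nat m + 1/2) z
    + (- of_int eps)^n * of_nat (fact (n + m)) / of_nat (fact (n - m))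
        * ((z - 1) powr (- (of_nat m / 2)) * (z + 1) powr (- (of_nat m / 2)))
        * (\<Sum>k<m. (-1)^k * (2 * of_nat k + 1) / (of_nat (n - k) * of_nat (k + n + 1))
              * legendreP_neg_signed k m eps z)
    - (- of_int eps)^(n + m) * of_nat (fact (2*m)) / (2^m * of_nat (fact m))
        * (\<Sum>k<n - m. (- of_int eps)^k * (2 * of_nat k + 2 * of_nat m + 1)
              / (of_nat (n - m - k) * of_nat (k + n + m + 1))
              * (1 - of_nat (fact k * fact (n + m)) / of_nat (fact (k + 2*m) * fact (n - m)))
              * gegenbauerC k (of_nat m + 1/2) z)"
proof -
  have z: "z \<in> cut_plane"
    using assms(3) by (simp add: cut_plane_def)
  have "of_int eps = (1::complex) \<or> of_int eps = (-1::complex)"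
    using assms(2) by auto
  from higher_deriv_legendreP_mult_Ln[OF this assms(1) z] legendre_log_expansion_eq[OF assms(1,2) z]
  show ?thesis
    by (simp only: odd_double_fact_def fact_ratio_def times_divide_eq_right mult.assoc)
qed
end
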